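(* Define on $\mathbb{D}$ the harmonic mapping $f_D=h_D+\overline{g_D}$, where $$h_D(z)=\tfrac14\log\frac{1+z}{1-z}-\tfrac{i}{4}\log\frac{1+iz}{1-iz},\qquad g_D(z)=-\tfrac14\log\frac{1+z}{1-z}-\tfrac{i}{4}\log\frac{1+iz}{1-iz}.$$ Define also $f_C=h_C+\overline{g_C}$, where $$h_C(z)=\tfrac14\log\frac{1+z}{1-z}+\tfrac12\,\frac{z}{1-z^2},\qquad g_C(z)=\tfrac14\log\frac{1+z}{1-z}-\tfrac12\,\frac{z}{1-z^2}.$$ Both $f_D$ and $f_C$ have dilatation $\omega(z)=-z^2$. For every $t\in[0,1]$, the harmonic mapping $f_t=(1-t)f_D+tf_C$ is univalent on $\mathbb{D}$.
   Context: $\mathbb{D}=\{z\in\mathbb{C}:|z|<1\}$, and $\log$ denotes the principal branch. For $z\in\mathbb{D}$ the quantities $(1+z)/(1-z)$ and $(1+iz)/(1-iz)$ lie in the right half-plane. The dilatation of a harmonic mapping $h+\overline{g}$ is $g'/h'$. *)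

theory Defs
  imports "HOL-Analysis.Analysis"
begin

definition unit_disk :: "complex set" where
  "unit_disk = ball 0 1"

definition dilatation :: "(complex \<Rightarrow> complex) \<Rightarrow> (complex \<Rightarrow> complex) \<Rightarrow> complex \<Rightarrow> complex" where
  "dilatation h g z = deriv g z / deriv h z"

definition hD :: "complex \<Rightarrow> complex" where
  "hD z = (1/4) * Ln ((1 + z) / (1 - z)) - (\<i>/4) * Ln ((1 + \<i>*z) / (1 - \<i>*z))"

definition gD :: "complex \<Rightarrow> complex" where
  "gD z = -(1/4) * Ln ((1 + z) / (1 - z)) - (\<i>/4) * Ln ((1 + \<i>*z) / (1 - \<i>*z))"

definition hC :: "complex \<Rightarrow> complex" where
  "hC z = (1/4) * Ln ((1 + z) / (1 - z)) + (1/2) * (z / (1 - z^2))"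

definition gC :: "complex \<Rightarrow> complex" where
  "gC z = (1/4) * Ln ((1 + z) / (1 - z)) - (1/2) * (z / (1 - z^2))"

definition fD :: "complex \<Rightarrow> complex" where
  "fD z = hD z + cnj (gD z)"

definition fC :: "complex \<Rightarrow> complex" where
  "fC z = hC z + cnj (gC z)"

definition f_mix :: "real \<Rightarrow> complex \<Rightarrow> complex" where
  "f_mix t z = complex_of_real (1 - t) * fD z + complex_of_real t * fC z"

end

theory Submission
  imports Defs
begin

text \<open>The substitution \<open>X + \<i> Y = Ln ((1 + z) / (1 - z))\<close> maps the disk bijectively onto the strip
  \<open>\<bar>Y\<bar> < pi/2\<close>, and there both maps become elementary:
  \<open>2 f\<^sub>D = arctan (sinh X / cos Y) + \<i> Y\<close> and \<open>2 f\<^sub>C = X + \<i> cosh X sin Y\<close>.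
  The real part of \<open>2 f\<^sub>t\<close> is odd in \<open>X\<close>, even in \<open>Y\<close> and has the sign of \<open>X\<close>; the imaginary part
  is even in \<open>X\<close>, odd in \<open>Y\<close> and has the sign of \<open>Y\<close>. So points with the same image lie in the
  same closed quadrant, and only the open quadrant \<open>X, Y > 0\<close> needs an argument. There the
  imaginary part increases in both variables, so along one of its level curves \<open>Y\<close> decreases as
  \<open>X\<close> increases, and a direct computation shows that the real part is strictly decreasing in \<open>Y\<close>
  along the curve: it separates the points of each level curve.\<close>

text \<open>In the coordinates \<open>X + \<i> Y = Ln ((1 + z) / (1 - z))\<close> the map \<open>2 * f_mix t\<close> becomes
  \<open>strip_re t X Y + \<i> * strip_im t X Y\<close> (lemma \<open>f_mix_eq_strip\<close>).\<close>

definition strip_re :: "real \<Rightarrow> real \<Rightarrow> real \<Rightarrow> real" where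
  "strip_re t X Y = (1 - t) * arctan (sinh X / cos Y) + t * X"

definition strip_im :: "real \<Rightarrow> real \<Rightarrow> real \<Rightarrow> real" where
  "strip_im t X Y = (1 - t) * Y + t * cosh X * sin Y"

lemma strip_re_zero [simp]: "strip_re t 0 Y = 0"
  and strip_re_minus_left [simp]: "strip_re t (- X) Y = - strip_re t X Y"
  and strip_re_minus_right [simp]: "strip_re t X (- Y) = strip_re t X Y"
  by (simp_all add: strip_re_def arctan_minus algebra_simps)

lemma strip_im_zero [simp]: "strip_im t X 0 = 0"
  and strip_im_minus_left [simp]: "strip_im t (- X) Y = strip_im t X Y"
  and strip_im_minus_right [simp]: "strip_im t X (- Y) = - strip_im t X Y"
  by (simp_all add: strip_im_def algebra_simps)

lemma strip_re_strict_mono_left: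
  assumes t: "0 \<le> t" "t \<le> 1" and Y: "\<bar>Y\<bar> < pi/2" and X: "X < X'"
  shows "strip_re t X Y < strip_re t X' Y"
proof -
  have "cos Y > 0" using Y by (intro cos_gt_zero_pi) auto
  moreover have "sinh X < sinh X'" using X by simp
  ultimately have "arctan (sinh X / cos Y) < arctan (sinh X' / cos Y)"
    by (simp add: arctan_less_iff divide_strict_right_mono)
  show ?thesis
  proof (cases "t = 1")
    case True
    then show ?thesis using X by (simp add: strip_re_def)
  next
    case False
    with t \<open>arctan _ < arctan _\<close>
    have "(1 - t) * arctan (sinh X / cos Y) < (1 - t) * arctan (sinh X' / cos Y)" by simp
    moreover have "t * X \<le> t * X'" using t X by (simp add: mult_left_mono)
    ultimately show ?thesis by (simp add: strip_re_def)
  qed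
qed

lemma strip_im_strict_mono_right:
  assumes t: "0 \<le> t" "t \<le> 1" and Y: "\<bar>Y\<bar> < pi/2" "\<bar>Y'\<bar> < pi/2" "Y < Y'"
  shows "strip_im t X Y < strip_im t X Y'"
proof -
  have "sin Y < sin Y'" using Y by (intro sin_monotone_2pi) auto
  show ?thesis
  proof (cases "t = 0")
    case True
    then show ?thesis using Y by (simp add: strip_im_def)
  next
    case False
    with t \<open>sin Y < sin Y'\<close> have "t * cosh X * sin Y < t * cosh X * sin Y'" by simp
    moreover have "(1 - t) * Y \<le> (1 - t) * Y'" using t Y by (simp add: mult_left_mono)
    ultimately show ?thesis by (simp add: strip_im_def)
  qed
qed

lemma strip_im_strict_mono_left:
  assumes "0 < t" "0 < Y" "Y < pi/2" "0 \<le> X" "X < X'"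
  shows "strip_im t X Y < strip_im t X' Y"
  using assms sin_gt_zero[of Y] cosh_real_nonneg_less_iff[of X X'] by (simp add: strip_im_def)

lemma sgn_strip_re:
  assumes "0 \<le> t" "t \<le> 1" "\<bar>Y\<bar> < pi/2"
  shows "sgn (strip_re t X Y) = sgn X"
  using strip_re_strict_mono_left[OF assms, of 0 X] strip_re_strict_mono_left[OF assms, of X 0]
  by (cases X "0::real" rule: linorder_cases) auto

lemma sgn_strip_im:
  assumes "0 \<le> t" "t \<le> 1" "\<bar>Y\<bar> < pi/2"
  shows "sgn (strip_im t X Y) = sgn Y"
  using strip_im_strict_mono_right[of t 0 Y X] strip_im_strict_mono_right[of t Y 0 X] assms
  by (cases Y "0::real" rule: linorder_cases) auto

lemma strip_re_abs_abs:
  assumes "0 \<le> t" "t \<le> 1" "\<bar>Y\<bar> < pi/2"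
  shows "strip_re t (\<bar>X\<bar>) (\<bar>Y\<bar>) = \<bar>strip_re t X Y\<bar>"
  using sgn_strip_re[OF assms, of X] by (auto simp: abs_if sgn_if split: if_splits)

lemma strip_im_abs_abs:
  assumes "0 \<le> t" "t \<le> 1" "\<bar>Y\<bar> < pi/2"
  shows "strip_im t (\<bar>X\<bar>) (\<bar>Y\<bar>) = \<bar>strip_im t X Y\<bar>"
  using sgn_strip_im[OF assms, of X] by (auto simp: abs_if sgn_if split: if_splits)

text \<open>Here \<open>x'\<close> is the slope \<open>dX/dY\<close> of the level curve of \<open>strip_im t\<close> through \<open>(x, Y)\<close>,
  and the left-hand side is the derivative of \<open>strip_re t\<close> along that curve.\<close>

lemma level_curve_slope_neg:
  fixes t x Y :: real
  assumes t: "0 < t" "t < 1" and x: "0 < x" and Y: "0 < Y" "Y < pi/2"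
  defines "x' \<equiv> - ((1 - t) + t * cosh x * cos Y) / (t * sin Y * sinh x)"
  shows "(1 - t) * (cosh x * x' * cos Y + sinh x * sin Y) / ((cos Y)\<^sup>2 + (sinh x)\<^sup>2) + t * x' < 0"
proof -
  define a where "a = cosh x * cos Y"
  define b where "b = sinh x * sin Y"
  define Q where "Q = (cos Y)\<^sup>2 + (sinh x)\<^sup>2"
  have "sin Y > 0" "cos Y > 0" using Y by (auto intro: sin_gt_zero cos_gt_zero)
  moreover have "sinh x > 0" using x by simp
  ultimately have a: "a > 0" and b: "b > 0" and Q: "Q > 0"
    by (auto simp: a_def b_def Q_def add_pos_nonneg)
  have Q_eq: "Q = a\<^sup>2 + b\<^sup>2"
    using sin_cos_squared_add[of Y] unfolding Q_def a_def b_def power_mult_distrib cosh_square_eq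
    by algebra
  have "x' = - ((1 - t) + t * a) / (t * b)"
    by (simp add: x'_def a_def b_def mult_ac)
  then have x'_tb: "x' * (t * b) = - ((1 - t) + t * a)"
    using t b by simp
  define P where "P = (1 - t) * (a * x' + b) / Q + t * x'"
  have "P * (Q * (t * b)) = (1 - t) * (a * (x' * (t * b)) + t * b\<^sup>2) + t * (x' * (t * b)) * Q"
    using Q unfolding P_def by (simp add: field_simps power2_eq_square)
  also have "\<dots> = - ((1 - t)\<^sup>2 * a + 2 * (1 - t) * t * a\<^sup>2 + t\<^sup>2 * a * Q)"
    unfolding x'_tb Q_eq by (simp add: algebra_simps power2_eq_square)
  also have "\<dots> < 0"
  proof -
    have "0 \<le> (1 - t)\<^sup>2 * a" "0 \<le> 2 * (1 - t) * t * a\<^sup>2" "0 < t\<^sup>2 * a * Q"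
      using a t Q by auto
    then show ?thesis by linarith
  qed
  finally have "P < 0"
    using Q t b by (simp add: mult_less_0_iff)
  then show ?thesis
    by (simp add: P_def Q_def a_def b_def mult_ac)
qed

text \<open>For \<open>R Y > 1\<close>, \<open>X = arcosh (R Y)\<close> is the positive solution of \<open>strip_im t X Y = c\<close>.\<close>

lemma strip_re_level_curve_has_neg_derivative:
  fixes t c Y :: real
  assumes t: "0 < t" "t < 1" and Y: "0 < Y" "Y < pi/2"
  defines "R \<equiv> \<lambda>Y. (c - (1 - t) * Y) / (t * sin Y)"
  assumes R: "R Y > 1"
  shows "\<exists>D. ((\<lambda>Y. strip_re t (arcosh (R Y)) Y) has_real_derivative D) (at Y) \<and> D < 0"
proof -
  have sY: "sin Y > 0" and cY: "cos Y > 0" using Y by (auto intro: sin_gt_zero cos_gt_zero)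
  define x where "x = arcosh (R Y)"
  define s where "s = sinh x"
  have cosh_x: "cosh x = R Y" and s_eq: "s = sqrt ((R Y)\<^sup>2 - 1)"
    using R by (simp_all add: x_def s_def sinh_arcosh_real)
  have x: "x > 0" using R by (simp add: x_def)
  then have s: "s > 0" by (simp add: s_def)
  define R' where
    "R' = (- (1 - t) * (t * sin Y) - (c - (1 - t) * Y) * (t * cos Y)) / (t * sin Y)\<^sup>2"
  define x' where "x' = R' / s"
  have "(R has_real_derivative R') (at Y)"
    unfolding R_def R'_def using sY t by (auto intro!: derivative_eq_intros simp: power2_eq_square)
  from DERIV_chain2[OF arcosh_real_has_field_derivative[OF R] this]
  have dx: "((\<lambda>Y. arcosh (R Y)) has_real_derivative x') (at Y)"
    by (simp add: x'_def s_eq)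
  have "((\<lambda>Y. strip_re t (arcosh (R Y)) Y) has_real_derivative
      (1 - t) * ((cosh x * x' * cos Y + s * sin Y) / (cos Y)\<^sup>2 / (1 + (s / cos Y)\<^sup>2)) + t * x') (at Y)"
    unfolding strip_re_def using cY
    by (auto intro!: derivative_eq_intros dx simp: x_def[symmetric] s_def[symmetric] power2_eq_square)
      (simp add: divide_inverse mult_ac)
  moreover have "(cosh x * x' * cos Y + s * sin Y) / (cos Y)\<^sup>2 / (1 + (s / cos Y)\<^sup>2)
      = (cosh x * x' * cos Y + s * sin Y) / ((cos Y)\<^sup>2 + s\<^sup>2)"
  proof -
    have "(cos Y)\<^sup>2 * (1 + (s / cos Y)\<^sup>2) = (cos Y)\<^sup>2 + s\<^sup>2"
      using cY by (simp add: field_simps)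
    then show ?thesis by simp
  qed
  moreover have "x' = - ((1 - t) + t * cosh x * cos Y) / (t * sin Y * s)"
  proof -
    have "c - (1 - t) * Y = t * cosh x * sin Y"
      using cosh_x sY t unfolding R_def by (simp add: field_simps)
    then show ?thesis
      unfolding x'_def R'_def using sY t s by (simp add: field_simps power2_eq_square)
  qed
  ultimately show ?thesis
    using level_curve_slope_neg[OF t x Y] unfolding s_def by auto
qed

lemma strip_im_level_set_antimono:
  assumes t: "0 < t" "t < 1" and X: "0 < X1" "X1 < X2"
    and Y: "0 < Y1" "Y1 < pi/2" "0 < Y2" "Y2 < pi/2"
    and eq: "strip_im t X1 Y1 = strip_im t X2 Y2"
  shows "Y2 < Y1"
proof (rule ccontr)
  assume "\<not> Y2 < Y1"
  then have "strip_im t X1 Y1 \<le> strip_im t X1 Y2"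
    using Y t strip_im_strict_mono_right[of t Y1 Y2 X1] by (cases "Y1 = Y2") auto
  also have "\<dots> < strip_im t X2 Y2" using X Y t by (intro strip_im_strict_mono_left) auto
  finally show False using eq by simp
qed

lemma strip_re_strict_mono_on_level_set:
  assumes t: "0 < t" "t < 1" and X: "0 < X1" "X1 < X2"
    and Y: "0 < Y1" "Y1 < pi/2" "0 < Y2" "Y2 < pi/2"
    and eq: "strip_im t X1 Y1 = strip_im t X2 Y2"
  shows "strip_re t X1 Y1 < strip_re t X2 Y2"
proof -
  have "Y2 < Y1" using strip_im_level_set_antimono[OF assms] .
  define c where "c = strip_im t X1 Y1"
  define R where "R = (\<lambda>Y. (c - (1 - t) * Y) / (t * sin Y))"
  have R_eq: "R Y1 = cosh X1" "R Y2 = cosh X2"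
    using t Y sin_gt_zero[of Y1] sin_gt_zero[of Y2] eq
    by (simp_all add: R_def c_def strip_im_def field_simps)
  have R_gt_1: "R Y > 1" if "Y2 \<le> Y" "Y \<le> Y1" for Y
  proof -
    have "sin Y > 0" using Y that by (intro sin_gt_zero) auto
    have "sin Y \<le> sin Y1" using Y that by (intro sin_monotone_2pi_le) auto
    have "c - (1 - t) * Y1 = t * cosh X1 * sin Y1" by (simp add: c_def strip_im_def)
    then have "c - (1 - t) * Y1 > 0" using t Y by (simp add: sin_gt_zero)
    moreover have "(1 - t) * Y \<le> (1 - t) * Y1" using that t by (simp add: mult_left_mono)
    ultimately have "0 \<le> c - (1 - t) * Y" "c - (1 - t) * Y1 \<le> c - (1 - t) * Y" by linarith+
    moreover have "0 < t * sin Y" "t * sin Y \<le> t * sin Y1"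
      using t \<open>sin Y > 0\<close> \<open>sin Y \<le> sin Y1\<close> by simp_all
    ultimately have "R Y1 \<le> R Y" unfolding R_def by (rule frac_le)
    moreover have "cosh X1 > 1" using X cosh_real_nonneg_less_iff[of 0 X1] by simp
    ultimately show ?thesis using R_eq by simp
  qed
  have "strip_re t (arcosh (R Y1)) Y1 < strip_re t (arcosh (R Y2)) Y2"
  proof (rule DERIV_neg_imp_decreasing[OF \<open>Y2 < Y1\<close>])
    fix Y assume "Y2 \<le> Y" "Y \<le> Y1"
    with Y R_gt_1
    show "\<exists>D. ((\<lambda>Y. strip_re t (arcosh (R Y)) Y) has_real_derivative D) (at Y) \<and> D < 0"
      unfolding R_def by (intro strip_re_level_curve_has_neg_derivative t) auto
  qed
  then show ?thesis using X R_eq by (simp add: arcosh_cosh_real)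
qed

lemma strip_inj:
  assumes t: "0 \<le> t" "t \<le> 1" and Y: "\<bar>Y1\<bar> < pi/2" "\<bar>Y2\<bar> < pi/2"
    and eq_re: "strip_re t X1 Y1 = strip_re t X2 Y2"
    and eq_im: "strip_im t X1 Y1 = strip_im t X2 Y2"
  shows "X1 = X2 \<and> Y1 = Y2"
proof -
  have Y_eq: "Y1 = Y2" if "X1 = X2"
    using strip_im_strict_mono_right[OF t Y, of X1] strip_im_strict_mono_right[OF t Y(2,1), of X1]
      eq_im that
    by (cases Y1 Y2 rule: linorder_cases) auto
  have X_eq: "X1 = X2" if "Y1 = Y2"
    using strip_re_strict_mono_left[OF t Y(1), of X1 X2] strip_re_strict_mono_left[OF t Y(1), of X2 X1]
      eq_re that
    by (cases X1 X2 rule: linorder_cases) auto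
  have "X1 = X2"
  proof (rule ccontr)
    assume "X1 \<noteq> X2"
    then have "t \<noteq> 0" "t \<noteq> 1" "Y1 \<noteq> Y2" using X_eq eq_re eq_im
      by (auto simp: strip_re_def strip_im_def)
    have sgn_X: "sgn X1 = sgn X2"
      using sgn_strip_re[OF t Y(1), of X1] sgn_strip_re[OF t Y(2), of X2] eq_re by simp
    have sgn_Y: "sgn Y1 = sgn Y2"
      using sgn_strip_im[OF t Y(1), of X1] sgn_strip_im[OF t Y(2), of X2] eq_im by simp
    have "\<bar>X1\<bar> \<noteq> \<bar>X2\<bar>" using \<open>X1 \<noteq> X2\<close> sgn_X by (auto simp: abs_if sgn_if split: if_splits)
    moreover have "X1 \<noteq> 0" "X2 \<noteq> 0" using sgn_X \<open>X1 \<noteq> X2\<close> by (auto simp: sgn_if split: if_splits)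
    moreover have "Y1 \<noteq> 0" "Y2 \<noteq> 0" using sgn_Y \<open>Y1 \<noteq> Y2\<close> by (auto simp: sgn_if split: if_splits)
    moreover have "strip_re t (\<bar>X1\<bar>) (\<bar>Y1\<bar>) = strip_re t (\<bar>X2\<bar>) (\<bar>Y2\<bar>)"
      "strip_im t (\<bar>X1\<bar>) (\<bar>Y1\<bar>) = strip_im t (\<bar>X2\<bar>) (\<bar>Y2\<bar>)"
      using eq_re eq_im strip_re_abs_abs[OF t Y(1), of X1] strip_re_abs_abs[OF t Y(2), of X2]
        strip_im_abs_abs[OF t Y(1), of X1] strip_im_abs_abs[OF t Y(2), of X2] by simp_all
    ultimately show False
      using t \<open>t \<noteq> 0\<close> \<open>t \<noteq> 1\<close> Y
        strip_re_strict_mono_on_level_set[of t "\<bar>X1\<bar>" "\<bar>X2\<bar>" "\<bar>Y1\<bar>" "\<bar>Y2\<bar>"]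
        strip_re_strict_mono_on_level_set[of t "\<bar>X2\<bar>" "\<bar>X1\<bar>" "\<bar>Y2\<bar>" "\<bar>Y1\<bar>"]
      by (cases "\<bar>X1\<bar>" "\<bar>X2\<bar>" rule: linorder_cases) auto
  qed
  with Y_eq show ?thesis by simp
qed

lemma Re_Cayley: "Re ((1 + z) / (1 - z)) = (1 - (norm z)\<^sup>2) / (norm (1 - z))\<^sup>2"
  by (simp add: Re_divide cmod_power2) (simp add: power2_eq_square algebra_simps)

lemma Im_Cayley: "Im ((1 + z) / (1 - z)) = 2 * Im z / (norm (1 - z))\<^sup>2"
  by (simp add: Im_divide cmod_power2) (simp add: power2_eq_square algebra_simps)

lemma norm_Cayley_power2:
  assumes "z \<noteq> 1"
  shows "(norm ((1 + z) / (1 - z)))\<^sup>2 - 1 = 4 * Re z / (norm (1 - z))\<^sup>2"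
proof -
  have "(norm (1 + z))\<^sup>2 - (norm (1 - z))\<^sup>2 = 4 * Re z"
    by (simp add: cmod_power2) (simp add: power2_eq_square algebra_simps)
  moreover have "norm (1 - z) \<noteq> 0" using assms by simp
  ultimately show ?thesis by (simp add: norm_divide field_simps)
qed

lemma Re_Cayley_pos:
  fixes z :: complex
  assumes "norm z < 1"
  shows "Re ((1 + z) / (1 - z)) > 0"
proof -
  have "(norm z)\<^sup>2 < 1" using assms by (simp add: power_less_one_iff)
  moreover have "1 - z \<noteq> 0" using assms by auto
  ultimately show ?thesis by (simp add: Re_Cayley)
qed

lemma
  fixes z :: complex
  assumes "norm z < 1"
  shows one_minus_power2_nonzero: "1 - z\<^sup>2 \<noteq> 0"
    and one_plus_power2_nonzero: "1 + z\<^sup>2 \<noteq> 0"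
proof -
  have "norm (z\<^sup>2) < 1"
    using assms by (simp add: norm_power power_less_one_iff)
  then show "1 - z\<^sup>2 \<noteq> 0" "1 + z\<^sup>2 \<noteq> 0"
    by (auto simp: add_eq_0_iff)
qed

definition strip_map :: "complex \<Rightarrow> complex" where
  "strip_map z = Ln ((1 + z) / (1 - z))"

lemma abs_Im_strip_map:
  "norm z < 1 \<Longrightarrow> \<bar>Im (strip_map z)\<bar> < pi/2"
  unfolding strip_map_def by (intro Re_Ln_pos_lt_imp Re_Cayley_pos)

lemma exp_strip_map:
  "norm z < 1 \<Longrightarrow> exp (strip_map z) = (1 + z) / (1 - z)"
  unfolding strip_map_def using Re_Cayley_pos[of z] by (intro exp_Ln) auto

lemma inj_on_strip_map: "inj_on strip_map (ball 0 1)"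
proof (rule inj_onI)
  fix z1 z2 :: complex
  assume "z1 \<in> ball 0 1" "z2 \<in> ball 0 1" and "strip_map z1 = strip_map z2"
  then have "(1 + z1) / (1 - z1) = (1 + z2) / (1 - z2)" "1 - z1 \<noteq> 0" "1 - z2 \<noteq> 0"
    using exp_strip_map[of z1] exp_strip_map[of z2] by auto
  then have "(1 + z1) * (1 - z2) = (1 + z2) * (1 - z1)" by (simp add: frac_eq_eq)
  then show "z1 = z2" by (simp add: algebra_simps)
qed

lemma sinh_strip_map:
  assumes "norm z < 1"
  shows "z / (1 - z\<^sup>2) = sinh (strip_map z) / 2"
proof -
  have "1 - z \<noteq> 0" "1 + z \<noteq> 0" using assms by (auto simp: add_eq_0_iff)
  with one_minus_power2_nonzero[OF assms] show ?thesis
    unfolding sinh_field_def exp_minus exp_strip_map[OF assms]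
    by (simp add: field_simps power2_eq_square)
qed

lemma Im_sinh: "Im (sinh u) = cosh (Re u) * sin (Im u)"
  by (simp add: sinh_field_def cosh_field_def Im_exp algebra_simps add_divide_distrib)

lemma sinh_Re_div_cos_Im_strip_map:
  assumes "norm z < 1"
  shows "sinh (Re (strip_map z)) / cos (Im (strip_map z)) = 2 * Re z / (1 - (norm z)\<^sup>2)"
proof -
  define w where "w = exp (strip_map z)"
  have w: "w = (1 + z) / (1 - z)" using exp_strip_map[OF assms] by (simp add: w_def)
  have "z \<noteq> 1" using assms by auto
  have "(norm z)\<^sup>2 < 1" using assms by (simp add: power_less_one_iff)
  have "cos (Im (strip_map z)) > 0"
    using abs_Im_strip_map[OF assms] by (intro cos_gt_zero_pi) auto
  then have "sinh (Re (strip_map z)) / cos (Im (strip_map z))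
      = ((exp (Re (strip_map z)))\<^sup>2 - 1) / (2 * (exp (Re (strip_map z)) * cos (Im (strip_map z))))"
    by (simp add: sinh_field_def exp_minus field_simps power2_eq_square)
  also have "\<dots> = ((norm w)\<^sup>2 - 1) / (2 * Re w)"
    by (simp add: w_def Re_exp)
  also have "\<dots> = 2 * Re z / (1 - (norm z)\<^sup>2)"
    unfolding w norm_Cayley_power2[OF \<open>z \<noteq> 1\<close>] Re_Cayley
    using \<open>z \<noteq> 1\<close> \<open>(norm z)\<^sup>2 < 1\<close> by (simp add: field_simps)
  finally show ?thesis .
qed

lemma Im_strip_map_rotated:
  assumes "norm z < 1"
  shows "Im (strip_map (\<i> * z)) = arctan (2 * Re z / (1 - (norm z)\<^sup>2))"
proof -
  have "norm (\<i> * z) < 1" using assms by (simp add: norm_mult)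
  then have "\<i> * z \<noteq> 1" by auto
  from \<open>norm (\<i> * z) < 1\<close> have pos: "Re ((1 + \<i> * z) / (1 - \<i> * z)) > 0"
    by (rule Re_Cayley_pos)
  then have "Im (strip_map (\<i> * z)) = Arg ((1 + \<i> * z) / (1 - \<i> * z))"
    unfolding strip_map_def by (intro Arg_eq_Im_Ln[symmetric]) auto
  also have "\<dots> = arctan (2 * Re z / (1 - (norm z)\<^sup>2))"
    using pos \<open>\<i> * z \<noteq> 1\<close> unfolding arg_conv_arctan[OF pos] Re_Cayley Im_Cayley
    by (simp add: norm_mult power2_eq_square field_simps)
  finally show ?thesis .
qed

lemma fD_eq_strip:
  assumes z: "norm z < 1"
  defines "X \<equiv> Re (strip_map z)" and "Y \<equiv> Im (strip_map z)"
  shows "fD z = Complex (arctan (sinh X / cos Y)) Y / 2"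
proof -
  have "Im (strip_map (\<i> * z)) = arctan (sinh X / cos Y)"
    unfolding X_def Y_def sinh_Re_div_cos_Im_strip_map[OF z] Im_strip_map_rotated[OF z] ..
  moreover have "fD z = strip_map z / 4 - \<i> * strip_map (\<i> * z) / 4
      + cnj (- strip_map z / 4 - \<i> * strip_map (\<i> * z) / 4)"
    unfolding fD_def hD_def gD_def strip_map_def by simp
  ultimately show ?thesis
    by (simp add: Y_def complex_eq_iff)
qed

lemma fC_eq_strip:
  assumes z: "norm z < 1"
  defines "X \<equiv> Re (strip_map z)" and "Y \<equiv> Im (strip_map z)"
  shows "fC z = Complex X (cosh X * sin Y) / 2"
proof -
  have "fC z = strip_map z / 4 + sinh (strip_map z) / 4
      + cnj (strip_map z / 4 - sinh (strip_map z) / 4)"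
    unfolding fC_def hC_def gC_def strip_map_def[symmetric] sinh_strip_map[OF z] by simp
  then show ?thesis
    by (simp add: X_def Y_def Im_sinh complex_eq_iff)
qed

lemma f_mix_eq_strip:
  assumes z: "norm z < 1"
  defines "X \<equiv> Re (strip_map z)" and "Y \<equiv> Im (strip_map z)"
  shows "f_mix t z = Complex (strip_re t X Y) (strip_im t X Y) / 2"
  using fD_eq_strip[OF z] fC_eq_strip[OF z]
  by (simp add: f_mix_def strip_re_def strip_im_def X_def Y_def complex_eq_iff algebra_simps)

lemma has_field_derivative_strip_map:
  fixes z :: complex
  assumes z: "norm z < 1"
  shows "(strip_map has_field_derivative 2 / (1 - z\<^sup>2)) (at z)"
proof -
  have "1 - z \<noteq> 0" "1 + z \<noteq> 0" using z by (auto simp: add_eq_0_iff)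
  have "(1 + z) / (1 - z) \<notin> \<real>\<^sub>\<le>\<^sub>0"
    using Re_Cayley_pos[OF z] by (auto simp: complex_nonpos_Reals_iff)
  moreover have "((\<lambda>z. (1 + z) / (1 - z)) has_field_derivative 2 / (1 - z)\<^sup>2) (at z)"
    using \<open>1 - z \<noteq> 0\<close> by (auto intro!: derivative_eq_intros simp: field_simps power2_eq_square)
  ultimately have
    "(strip_map has_field_derivative inverse ((1 + z) / (1 - z)) * (2 / (1 - z)\<^sup>2)) (at z)"
    unfolding strip_map_def[abs_def] by (rule DERIV_chain2[OF has_field_derivative_Ln])
  moreover have "inverse ((1 + z) / (1 - z)) * (2 / (1 - z)\<^sup>2) = 2 / (1 - z\<^sup>2)"
    using \<open>1 - z \<noteq> 0\<close> \<open>1 + z \<noteq> 0\<close> by (simp add: divide_simps) algebra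
  ultimately show ?thesis by simp
qed

lemma has_field_derivative_strip_map_rotated:
  fixes z :: complex
  assumes "norm z < 1"
  shows "((\<lambda>z. strip_map (\<i> * z)) has_field_derivative 2 * \<i> / (1 + z\<^sup>2)) (at z)"
proof -
  have "norm (\<i> * z) < 1" using assms by (simp add: norm_mult)
  from DERIV_chain2[where g = "\<lambda>z. \<i> * z",
      OF has_field_derivative_strip_map[OF this] DERIV_cmult_Id]
  show ?thesis by (simp add: power_mult_distrib mult.commute)
qed

lemma has_field_derivative_div_one_minus_power2:
  fixes z :: complex
  assumes "norm z < 1"
  shows "((\<lambda>z. z / (1 - z\<^sup>2)) has_field_derivative (1 + z\<^sup>2) / (1 - z\<^sup>2)\<^sup>2) (at z)"
proof -
  have "1 - z\<^sup>2 \<noteq> 0" using one_minus_power2_nonzero[OF assms] .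
  then have "((\<lambda>z. z / (1 - z\<^sup>2)) has_field_derivative
      (1 * (1 - z\<^sup>2) - z * (- (2 * z))) / (1 - z\<^sup>2)\<^sup>2) (at z)"
    by (auto intro!: derivative_eq_intros simp: power2_eq_square)
  moreover have "1 * (1 - z\<^sup>2) - z * (- (2 * z)) = 1 + z\<^sup>2"
    by (simp add: power2_eq_square)
  ultimately show ?thesis by metis
qed

lemma dilatation_eqI:
  assumes "(h has_field_derivative 1 / d) (at z)" "(g has_field_derivative c / d) (at z)" "d \<noteq> 0"
  shows "dilatation h g z = c"
  using assms by (simp add: dilatation_def DERIV_imp_deriv)

lemma dilatation_hD_gD:
  assumes z: "norm z < 1"
  shows "dilatation hD gD z = - (z\<^sup>2)"
proof (rule dilatation_eqI)
  note L = has_field_derivative_strip_map[OF z]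
    and Li = has_field_derivative_strip_map_rotated[OF z]
  have nz: "1 - z\<^sup>2 \<noteq> 0" "1 + z\<^sup>2 \<noteq> 0"
    using one_minus_power2_nonzero[OF z] one_plus_power2_nonzero[OF z] .
  show "(hD has_field_derivative 1 / ((1 - z\<^sup>2) * (1 + z\<^sup>2))) (at z)"
    unfolding hD_def[abs_def] strip_map_def[symmetric]
    by (rule DERIV_cong[OF DERIV_diff[OF DERIV_cmult[OF L] DERIV_cmult[OF Li]]])
      (use nz in \<open>simp add: divide_simps\<close>, algebra)
  show "(gD has_field_derivative - (z\<^sup>2) / ((1 - z\<^sup>2) * (1 + z\<^sup>2))) (at z)"
    unfolding gD_def[abs_def] strip_map_def[symmetric]
    by (rule DERIV_cong[OF DERIV_diff[OF DERIV_cmult[OF L] DERIV_cmult[OF Li]]])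
      (use nz in \<open>simp add: divide_simps\<close>, algebra)
  show "(1 - z\<^sup>2) * (1 + z\<^sup>2) \<noteq> 0" using nz by simp
qed

lemma dilatation_hC_gC:
  assumes z: "norm z < 1"
  shows "dilatation hC gC z = - (z\<^sup>2)"
proof (rule dilatation_eqI)
  note L = has_field_derivative_strip_map[OF z]
    and R = has_field_derivative_div_one_minus_power2[OF z]
  have nz: "1 - z\<^sup>2 \<noteq> 0" using one_minus_power2_nonzero[OF z] .
  show "(hC has_field_derivative 1 / (1 - z\<^sup>2)\<^sup>2) (at z)"
    unfolding hC_def[abs_def] strip_map_def[symmetric]
    by (rule DERIV_cong[OF DERIV_add[OF DERIV_cmult[OF L] DERIV_cmult[OF R]]])
      (use nz in \<open>simp add: divide_simps\<close>, algebra)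
  show "(gC has_field_derivative - (z\<^sup>2) / (1 - z\<^sup>2)\<^sup>2) (at z)"
    unfolding gC_def[abs_def] strip_map_def[symmetric]
    by (rule DERIV_cong[OF DERIV_diff[OF DERIV_cmult[OF L] DERIV_cmult[OF R]]])
      (use nz in \<open>simp add: divide_simps\<close>, algebra)
  show "(1 - z\<^sup>2)\<^sup>2 \<noteq> 0" using nz by simp
qed

lemma inj_on_f_mix:
  assumes t: "0 \<le> t" "t \<le> 1"
  shows "inj_on (f_mix t) unit_disk"
proof (rule inj_onI)
  fix z1 z2 assume "z1 \<in> unit_disk" "z2 \<in> unit_disk" and eq: "f_mix t z1 = f_mix t z2"
  then have z: "norm z1 < 1" "norm z2 < 1" by (auto simp: unit_disk_def)
  define u1 u2 where "u1 = strip_map z1" and "u2 = strip_map z2"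
  have "strip_re t (Re u1) (Im u1) = strip_re t (Re u2) (Im u2)"
    "strip_im t (Re u1) (Im u1) = strip_im t (Re u2) (Im u2)"
    using eq unfolding f_mix_eq_strip[OF z(1)] f_mix_eq_strip[OF z(2)] u1_def u2_def
    by (simp_all add: complex_eq_iff)
  with strip_inj[OF t abs_Im_strip_map[OF z(1)] abs_Im_strip_map[OF z(2)]]
  have "strip_map z1 = strip_map z2"
    by (simp add: u1_def u2_def complex_eq_iff)
  then show "z1 = z2"
    using inj_on_strip_map z by (auto dest: inj_onD)
qed

theorem mainTheorem5:
  shows "(\<forall>z\<in>unit_disk. dilatation hD gD z = - (z^2))
       \<and> (\<forall>z\<in>unit_disk. dilatation hC gC z = - (z^2))
       \<and> (\<forall>t\<in>{0..1::real}. inj_on (f_mix t) unit_disk)"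
  using dilatation_hD_gD dilatation_hC_gC inj_on_f_mix by (simp add: unit_disk_def)

end
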